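(* Let $m=p_1^{\alpha_1}p_2^{\alpha_2}$, where $p_1,p_2>2$ are distinct primes and $\alpha_1,\alpha_2$ are positive integers. Let $t=\mathrm{ord}_m(2)$ and let $\gamma\in\mathbb{F}_{2^t}^*$ be a primitive $m$th root of unity. Then $m$ is good if and only if there is a polynomial $Q(X)=X^u+aX^v+b\in\mathbb{F}_{2^t}[X]$ (with $u,v$ nonnegative integers, $a,b\in\mathbb{F}_{2^t}$) such that (1) $ab\neq 0$; (2) the three residues $u\bmod m$, $v\bmod m$, $0$ are pairwise distinct; and (3) $Q(\gamma)=Q(\gamma^{s_{01}})=Q(\gamma^{s_{10}})=0$ and $Q(1)\neq 0$.
   Context: $\mathrm{ord}_m(2)$ is the multiplicative order of $2$ modulo $m$. The canonical set of $m$ is $S_m=\{s_{01},s_{10},s_{11}\}\subseteq\mathbb{Z}_m$, where for $\sigma=(\sigma_1,\sigma_2)\in\{0,1\}^2\setminus\{(0,0)\}$, $s_\sigma$ is the unique element of $\mathbb{Z}_m$ with $s_\sigma\equiv\sigma_1 \pmod{p_1^{\alpha_1}}$ and $s_\sigma\equiv \sigma_2\pmod{p_2^{\alpha_2}}$ (so $s_{11}=1$). An $S_m$-decoding polynomial is a polynomial $P(X)\in\mathbb{F}_{2^t}[X]$ such that $P(\gamma^s)=0$ for every $s\in S_m$ and $P(1)=1$. The number $m$ is called good if there exists an $S_m$-decoding polynomial with fewer than $4$ monomials (nonzero terms). *)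

theory Defs
  imports "HOL-Number_Theory.Number_Theory" "HOL-Computational_Algebra.Polynomial"
begin

definition canon_elem :: "nat \<Rightarrow> nat \<Rightarrow> nat \<Rightarrow> nat \<Rightarrow> nat" where
  "canon_elem q1 q2 s1 s2 =
     (THE s. s < q1 * q2 \<and> [s = s1] (mod q1) \<and> [s = s2] (mod q2))"

definition canonical_set :: "nat \<Rightarrow> nat \<Rightarrow> nat set" where
  "canonical_set q1 q2 = {canon_elem q1 q2 0 1, canon_elem q1 q2 1 0, canon_elem q1 q2 1 1}"

definition primitive_root_of_unity :: "nat \<Rightarrow> 'a::field \<Rightarrow> bool" where
  "primitive_root_of_unity m g \<longleftrightarrow> g ^ m = 1 \<and> (\<forall>k. 0 < k \<and> k < m \<longrightarrow> g ^ k \<noteq> 1)"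

definition num_monomials :: "'a::zero poly \<Rightarrow> nat" where
  "num_monomials P = card {i. coeff P i \<noteq> 0}"

definition decoding_poly :: "nat set \<Rightarrow> 'a::field \<Rightarrow> 'a poly \<Rightarrow> bool" where
  "decoding_poly S g P \<longleftrightarrow> (\<forall>s\<in>S. poly P (g ^ s) = 0) \<and> poly P 1 = 1"

definition good :: "nat \<Rightarrow> nat \<Rightarrow> 'a::field \<Rightarrow> bool" where
  "good q1 q2 g \<longleftrightarrow> (\<exists>P. decoding_poly (canonical_set q1 q2) g P \<and> num_monomials P < 4)"

end

theory Submission
  imports Defs
begin

(* Put A = gamma^s01 and B = gamma^s10. Since s11 = 1 and s01 + s10 = 1 (mod m), a decoding
   polynomial must vanish at gamma, A, B, where A B = gamma. A binomial c X^i + d X^j vanishing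
   at A and B satisfies c^2 gamma^i = d^2 gamma^j; together with c gamma^i = - d gamma^j this
   forces c + d = 0, so the binomial also vanishes at 1. Hence a decoding polynomial with at
   most three terms has exactly three, with exponents pairwise distinct mod m (terms with
   congruent exponents merge on m-th roots of unity); multiplying by a power of X that inverts
   X^l on m-th roots of unity and scaling turns it into Q. Conversely Q / Q(1) is a decoding
   polynomial. *)

lemma canon_elem_cong:
  assumes "coprime q1 q2" "q1 \<noteq> 0" "q2 \<noteq> 0"
  shows "canon_elem q1 q2 s1 s2 < q1 * q2"
    and "[canon_elem q1 q2 s1 s2 = s1] (mod q1)"
    and "[canon_elem q1 q2 s1 s2 = s2] (mod q2)"
  using theI'[OF binary_chinese_remainder_unique_nat[OF assms, of s1 s2]]
  unfolding canon_elem_def by blast+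

lemma canon_elem_1_1:
  assumes "coprime q1 q2" "1 < q1 * q2"
  shows "canon_elem q1 q2 1 1 = 1"
proof -
  have "q1 \<noteq> 0" "q2 \<noteq> 0" using assms(2) by (metis mult_eq_0_iff not_less_zero)+
  note s11 = canon_elem_cong[OF assms(1) this, of 1 1]
  have "[canon_elem q1 q2 1 1 = 1] (mod q1 * q2)"
    using s11 assms(1) by (blast intro: coprime_cong_mult_nat)
  then show ?thesis
    using s11(1) assms(2) by (blast intro: cong_less_modulus_unique_nat)
qed

lemma canon_elem_0_1_add_1_0:
  assumes "coprime q1 q2" "1 < q1 * q2"
  shows "(canon_elem q1 q2 0 1 + canon_elem q1 q2 1 0) mod (q1 * q2) = 1"
proof -
  have "q1 \<noteq> 0" "q2 \<noteq> 0" using assms(2) by (metis mult_eq_0_iff not_less_zero)+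
  note s01 = canon_elem_cong[OF assms(1) this, of 0 1]
    and s10 = canon_elem_cong[OF assms(1) this, of 1 0]
  have "[canon_elem q1 q2 0 1 + canon_elem q1 q2 1 0 = 0 + 1] (mod q1)"
    and "[canon_elem q1 q2 0 1 + canon_elem q1 q2 1 0 = 1 + 0] (mod q2)"
    using s01 s10 by (blast intro: cong_add)+
  then have "[canon_elem q1 q2 0 1 + canon_elem q1 q2 1 0 = 1] (mod q1 * q2)"
    using assms(1) by (simp add: coprime_cong_mult_nat)
  then show ?thesis
    using assms(2) by (auto simp: cong_def)
qed

lemma canonical_set_eq:
  assumes "coprime q1 q2" "1 < q1 * q2"
  shows "canonical_set q1 q2 = {canon_elem q1 q2 0 1, canon_elem q1 q2 1 0, 1}"
  unfolding canonical_set_def canon_elem_1_1[OF assms] ..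

lemma power_mod_exponent:
  fixes x :: "'a::monoid_mult"
  assumes "x ^ m = 1"
  shows "x ^ n = x ^ (n mod m)"
proof -
  have "x ^ n = (x ^ m) ^ (n div m) * x ^ (n mod m)"
    unfolding power_mult[symmetric] power_add[symmetric] by simp
  then show ?thesis
    using assms by simp
qed

lemma canon_elem_powers_mult:
  fixes g :: "'a::monoid_mult"
  assumes "coprime q1 q2" "1 < q1 * q2" "g ^ (q1 * q2) = 1"
  shows "g ^ canon_elem q1 q2 0 1 * g ^ canon_elem q1 q2 1 0 = g"
  unfolding power_add[symmetric] power_mod_exponent[OF assms(3), of "_ + _"]
    canon_elem_0_1_add_1_0[OF assms(1,2)] by simp

lemma poly_eq_sum_support:
  fixes P :: "'a::comm_semiring_1 poly"
  assumes "finite S" "{i. coeff P i \<noteq> 0} \<subseteq> S"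
  shows "poly P x = (\<Sum>i\<in>S. coeff P i * x ^ i)"
proof -
  have "poly P x = (\<Sum>i\<in>S \<union> {..degree P}. coeff P i * x ^ i)"
    unfolding poly_altdef using assms(1)
    by (intro sum.mono_neutral_left) (auto simp: coeff_eq_0)
  also have "\<dots> = (\<Sum>i\<in>S. coeff P i * x ^ i)"
  proof (rule sum.mono_neutral_right)
    show "\<forall>i\<in>S \<union> {..degree P} - S. coeff P i * x ^ i = 0"
      using assms(2) by (metis (mono_tags) Diff_iff mem_Collect_eq mult_zero_left subsetD)
  qed (use assms(1) in auto)
  finally show ?thesis .
qed

lemma finite_coeff_support: "finite {i. coeff (P :: 'a::zero poly) i \<noteq> 0}"
  by (rule finite_subset[of _ "{..degree P}"]) (auto dest: le_degree)

lemma num_monomials_le_card: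
  assumes "finite S" "{i. coeff P i \<noteq> 0} \<subseteq> S"
  shows "num_monomials P \<le> card S"
  unfolding num_monomials_def using assms by (rule card_mono)

lemma finite_card_le_3_cases:
  assumes "finite I" "card I \<le> 3"
  obtains "I = {}" | i where "I = {i}" | i j where "I = {i, j}" "i \<noteq> j"
    | i j l where "I = {i, j, l}" "i \<noteq> j" "j \<noteq> l" "i \<noteq> l"
proof -
  have "card I = 0 \<or> card I = 1 \<or> card I = 2 \<or> card I = 3" using assms(2) by linarith
  then show thesis
    using assms(1) that by (auto simp: card_1_singleton_iff card_2_iff card_3_iff)
qed

lemma num_monomials_le_3_imp_trinomial:
  fixes P :: "'a::comm_semiring_1 poly"
  assumes "num_monomials P \<le> 3"
  shows "\<exists>c i d j e l. \<forall>x. poly P x = c * x ^ i + d * x ^ j + e * x ^ l"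
proof -
  define I where "I = {i. coeff P i \<noteq> 0}"
  have "finite I" unfolding I_def by (rule finite_coeff_support)
  moreover have "card I \<le> 3" using assms unfolding num_monomials_def I_def .
  moreover have poly_I: "poly P x = (\<Sum>i\<in>I. coeff P i * x ^ i)" for x
    using \<open>finite I\<close> by (rule poly_eq_sum_support) (simp add: I_def)
  ultimately show ?thesis
  proof (cases rule: finite_card_le_3_cases)
    case 1
    then have "\<forall>x. poly P x = 0 * x ^ 0 + 0 * x ^ 0 + 0 * x ^ 0" using poly_I by simp
    then show ?thesis by blast
  next
    case (2 i)
    then have "\<forall>x. poly P x = coeff P i * x ^ i + 0 * x ^ 0 + 0 * x ^ 0" using poly_I by simp
    then show ?thesis by blast
  next
    case (3 i j)
    then have "\<forall>x. poly P x = coeff P i * x ^ i + coeff P j * x ^ j + 0 * x ^ 0"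
      using poly_I by simp
    then show ?thesis by blast
  next
    case (4 i j l)
    then have "\<forall>x. poly P x = coeff P i * x ^ i + coeff P j * x ^ j + coeff P l * x ^ l"
      using poly_I by (simp add: add.assoc)
    then show ?thesis by blast
  qed
qed

lemma binomial_vanishing_at_product_triple:
  fixes A B g c d :: "'a::field"
  assumes "A * B = g" "g \<noteq> 0" "\<forall>x\<in>{g, A, B}. c * x ^ i + d * x ^ j = 0"
  shows "c + d = 0"
proof -
  have at_A: "c * A ^ i = - d * A ^ j" and at_B: "c * B ^ i = - d * B ^ j"
    and at_g: "c * g ^ i = - d * g ^ j"
    using assms(3) by (auto simp: eq_neg_iff_add_eq_0)
  have "(c * A ^ i) * (c * B ^ i) = (- d * A ^ j) * (- d * B ^ j)"
    using at_A at_B by simp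
  then have squares: "c\<^sup>2 * g ^ i = d\<^sup>2 * g ^ j"
    using assms(1) by (simp add: power2_eq_square power_mult_distrib[symmetric] algebra_simps)
  have "g ^ i \<noteq> 0" "g ^ j \<noteq> 0" using assms(2) by auto
  show ?thesis
  proof (cases "d = 0")
    case True
    then show ?thesis using at_g assms(2) by simp
  next
    case False
    have "(d * d) * g ^ j = (- c * d) * g ^ j"
      using squares arg_cong[OF at_g, of "(*) c"] by (simp add: power2_eq_square algebra_simps)
    then have "d * d = (- c) * d" by (simp only: mult_right_cancel[OF \<open>g ^ j \<noteq> 0\<close>])
    then have "d = - c" using False mult_right_cancel by blast
    then show ?thesis by simp
  qed
qed

lemma trinomial_exponents_distinct_mod:
  fixes A B g c d e :: "'a::field"
  assumes "A * B = g" "g \<noteq> 0" "\<forall>x\<in>{g, A, B}. x ^ m = 1"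
    and "\<forall>x\<in>{g, A, B}. c * x ^ i + d * x ^ j + e * x ^ l = 0" "c + d + e \<noteq> 0"
  shows "i mod m \<noteq> j mod m"
proof
  assume "i mod m = j mod m"
  then have "\<forall>x\<in>{g, A, B}. (c + d) * x ^ i + e * x ^ l = 0"
    using assms(3,4) power_mod_exponent by (metis distrib_right)
  then show False
    using binomial_vanishing_at_product_triple[OF assms(1,2)] assms(5) by blast
qed

lemma trinomial_coeff_nonzero:
  fixes A B g c d e :: "'a::field"
  assumes "A * B = g" "g \<noteq> 0"
    and "\<forall>x\<in>{g, A, B}. c * x ^ i + d * x ^ j + e * x ^ l = 0" "c + d + e \<noteq> 0"
  shows "e \<noteq> 0"
  using binomial_vanishing_at_product_triple[OF assms(1,2), of c i d j] assms(3,4) by auto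

lemma trinomial_shift:
  fixes x c d e :: "'a::field"
  assumes "x ^ (l + w) = 1" "c \<noteq> 0"
  shows "x ^ (i + w) + d / c * x ^ (j + w) + e / c = (c * x ^ i + d * x ^ j + e * x ^ l) * x ^ w / c"
  using assms by (simp add: power_add field_simps)

lemma cong_add_shift_iff:
  fixes u v i j l m :: nat
  assumes "[u + l = i] (mod m)" "[v + l = j] (mod m)"
  shows "[u = v] (mod m) \<longleftrightarrow> [i = j] (mod m)"
  by (metis assms cong_add_rcancel_nat cong_sym cong_trans)

definition has_separating_trinomial :: "nat \<Rightarrow> 'a::field set \<Rightarrow> bool" where
  "has_separating_trinomial m X \<longleftrightarrow>
     (\<exists>u v a b. a * b \<noteq> 0 \<and> u mod m \<noteq> v mod m \<and> u mod m \<noteq> 0 \<and> v mod m \<noteq> 0 \<and>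
        (\<forall>x\<in>X. x ^ u + a * x ^ v + b = 0) \<and> 1 + a + b \<noteq> 0)"

lemma separating_trinomial_of_sparse_poly:
  fixes P :: "'a::field poly"
  assumes "A * B = g" "g \<noteq> 0" "0 < m" "\<forall>x\<in>{g, A, B}. x ^ m = 1"
    and "\<forall>x\<in>{g, A, B}. poly P x = 0" "poly P 1 \<noteq> 0" "num_monomials P \<le> 3"
  shows "has_separating_trinomial m {g, A, B}"
proof -
  obtain c i d j e l where P: "\<And>x. poly P x = c * x ^ i + d * x ^ j + e * x ^ l"
    using num_monomials_le_3_imp_trinomial[OF assms(7)] by blast
  have vanish: "\<forall>x\<in>{g, A, B}. c * x ^ i + d * x ^ j + e * x ^ l = 0"
    and vanish_ilj: "\<forall>x\<in>{g, A, B}. c * x ^ i + e * x ^ l + d * x ^ j = 0"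
    and vanish_jli: "\<forall>x\<in>{g, A, B}. d * x ^ j + e * x ^ l + c * x ^ i = 0"
    using assms(5) by (simp_all add: P ac_simps)
  have "c + d + e \<noteq> 0" "c + e + d \<noteq> 0" "d + e + c \<noteq> 0"
    using assms(6) P[of 1] by (simp_all add: ac_simps)
  note distinct = trinomial_exponents_distinct_mod[OF assms(1,2,4)]
  have "i mod m \<noteq> j mod m" "i mod m \<noteq> l mod m" "j mod m \<noteq> l mod m"
    using distinct[OF vanish] distinct[OF vanish_ilj] distinct[OF vanish_jli]
      \<open>c + d + e \<noteq> 0\<close> \<open>c + e + d \<noteq> 0\<close> \<open>d + e + c \<noteq> 0\<close> by blast+
  note nonzero = trinomial_coeff_nonzero[OF assms(1,2)]
  have "c \<noteq> 0" "d \<noteq> 0" "e \<noteq> 0"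
    using nonzero[OF vanish_jli] nonzero[OF vanish_ilj] nonzero[OF vanish]
      \<open>c + d + e \<noteq> 0\<close> \<open>c + e + d \<noteq> 0\<close> \<open>d + e + c \<noteq> 0\<close> by blast+
  \<comment> \<open>On m-th roots of unity, x^w is the inverse of x^l.\<close>
  define w where "w = (m - 1) * l"
  have "l + w = m * l" unfolding w_def using assms(3) by (cases m) auto
  then have "[i + w + l = i] (mod m)" "[j + w + l = j] (mod m)" "[0 + l = l] (mod m)"
    by (simp_all add: cong_def add.assoc add.commute[of w l])
  then have "(i + w) mod m \<noteq> (j + w) mod m" "(i + w) mod m \<noteq> 0" "(j + w) mod m \<noteq> 0"
    using cong_add_shift_iff \<open>i mod m \<noteq> j mod m\<close> \<open>i mod m \<noteq> l mod m\<close> \<open>j mod m \<noteq> l mod m\<close>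
    unfolding cong_def by (metis mod_0)+
  have "x ^ (i + w) + d / c * x ^ (j + w) + e / c = 0" if "x \<in> {g, A, B}" for x
  proof -
    have "x ^ m = 1" using assms(4) that by blast
    then have "x ^ (l + w) = 1" using \<open>l + w = m * l\<close> by (simp add: power_mult)
    moreover have "c * x ^ i + d * x ^ j + e * x ^ l = 0" using vanish that by blast
    ultimately show ?thesis
      using trinomial_shift[of x l w c] \<open>c \<noteq> 0\<close> by simp
  qed
  moreover have "1 + d / c + e / c \<noteq> 0"
    using \<open>c + d + e \<noteq> 0\<close> \<open>c \<noteq> 0\<close> by (simp add: field_simps)
  moreover have "d / c * (e / c) \<noteq> 0"
    using \<open>c \<noteq> 0\<close> \<open>d \<noteq> 0\<close> \<open>e \<noteq> 0\<close> by simp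
  ultimately show ?thesis
    unfolding has_separating_trinomial_def using \<open>(i + w) mod m \<noteq> (j + w) mod m\<close>
      \<open>(i + w) mod m \<noteq> 0\<close> \<open>(j + w) mod m \<noteq> 0\<close> by blast
qed

lemma sparse_poly_of_separating_trinomial:
  fixes X :: "'a::field set"
  assumes "has_separating_trinomial m X"
  obtains P where "\<forall>x\<in>X. poly P x = 0" "poly P 1 = 1" "num_monomials P \<le> 3"
proof -
  obtain u v a b where vanish: "\<forall>x\<in>X. x ^ u + a * x ^ v + b = 0" and "1 + a + b \<noteq> 0"
    using assms unfolding has_separating_trinomial_def by blast
  define P where "P = smult (inverse (1 + a + b)) (monom 1 u + monom a v + [:b:])"
  have poly_P: "poly P x = inverse (1 + a + b) * (x ^ u + a * x ^ v + b)" for x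
    unfolding P_def by (simp add: poly_monom)
  have "coeff P i = inverse (1 + a + b) *
      ((if u = i then 1 else 0) + (if v = i then a else 0) + (if i = 0 then b else 0))" for i
    unfolding P_def by (cases i) (simp_all add: coeff_monom)
  then have "{i. coeff P i \<noteq> 0} \<subseteq> {u, v, 0}"
    by auto
  then have "num_monomials P \<le> card {u, v, 0}"
    by (intro num_monomials_le_card) auto
  also have "\<dots> \<le> 3"
    by (simp add: card_insert_if)
  finally have "num_monomials P \<le> 3" .
  moreover have "\<forall>x\<in>X. poly P x = 0" "poly P 1 = 1"
    using vanish \<open>1 + a + b \<noteq> 0\<close> by (simp_all add: poly_P)
  ultimately show thesis
    using that by blast
qed

lemma good_iff_has_separating_trinomial:
  fixes g :: "'a::field"
  assumes "coprime q1 q2" "1 < q1 * q2" "g ^ (q1 * q2) = 1"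
  shows "good q1 q2 g \<longleftrightarrow>
    has_separating_trinomial (q1 * q2) {g, g ^ canon_elem q1 q2 0 1, g ^ canon_elem q1 q2 1 0}"
    (is "_ \<longleftrightarrow> has_separating_trinomial ?m {g, ?A, ?B}")
proof -
  have "?A * ?B = g" by (rule canon_elem_powers_mult[OF assms])
  moreover have "g \<noteq> 0" using assms(2,3) by (metis power_0_left not_one_less_zero zero_neq_one)
  moreover have "\<forall>x\<in>{g, ?A, ?B}. x ^ ?m = 1"
    using assms(3) by (simp add: power_mult[symmetric] mult.commute[of _ ?m]) (simp add: power_mult)
  moreover have "0 < ?m" using assms(2) by linarith
  moreover have good_iff: "good q1 q2 g \<longleftrightarrow>
      (\<exists>P. (\<forall>x\<in>{g, ?A, ?B}. poly P x = 0) \<and> poly P 1 = 1 \<and> num_monomials P \<le> 3)"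
    unfolding good_def decoding_poly_def canonical_set_eq[OF assms(1,2)] by auto
  ultimately show ?thesis
    using separating_trinomial_of_sparse_poly[of ?A ?B g ?m]
      sparse_poly_of_separating_trinomial[of ?m "{g, ?A, ?B}"] by force
qed

theorem lemma4:
  fixes p1 p2 a1 a2 m t :: nat and \<gamma> :: "'a::{field,finite}"
  assumes "prime p1" "prime p2" "p1 > 2" "p2 > 2" "p1 \<noteq> p2"
    and "a1 > 0" "a2 > 0"
    and "m = p1 ^ a1 * p2 ^ a2"
    and "t = ord m 2"
    and "card (UNIV :: 'a set) = 2 ^ t"
    and "primitive_root_of_unity m \<gamma>"
  shows "good (p1 ^ a1) (p2 ^ a2) \<gamma> \<longleftrightarrow>
    (\<exists>(u::nat) (v::nat) (a::'a) (b::'a).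
        a * b \<noteq> 0 \<and>
        u mod m \<noteq> v mod m \<and> u mod m \<noteq> 0 \<and> v mod m \<noteq> 0 \<and>
        (let Q = (\<lambda>x::'a. x ^ u + a * x ^ v + b) in
           Q \<gamma> = 0 \<and> Q (\<gamma> ^ canon_elem (p1 ^ a1) (p2 ^ a2) 0 1) = 0 \<and>
           Q (\<gamma> ^ canon_elem (p1 ^ a1) (p2 ^ a2) 1 0) = 0 \<and> Q 1 \<noteq> 0))"
proof -
  have "coprime (p1 ^ a1) (p2 ^ a2)"
    using assms(1,2,5) by (simp add: primes_coprime)
  moreover have "1 < p1 ^ a1 * p2 ^ a2"
    using assms(1,2,6,7) by (metis less_1_mult one_less_power prime_gt_1_nat)
  moreover have "\<gamma> ^ (p1 ^ a1 * p2 ^ a2) = 1"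
    using assms(8,11) unfolding primitive_root_of_unity_def by simp
  ultimately have "good (p1 ^ a1) (p2 ^ a2) \<gamma> \<longleftrightarrow> has_separating_trinomial (p1 ^ a1 * p2 ^ a2)
      {\<gamma>, \<gamma> ^ canon_elem (p1 ^ a1) (p2 ^ a2) 0 1, \<gamma> ^ canon_elem (p1 ^ a1) (p2 ^ a2) 1 0}"
    by (rule good_iff_has_separating_trinomial)
  then show ?thesis
    unfolding has_separating_trinomial_def assms(8) Let_def by simp
qed

end
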